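(* Let $\lambda,\mu,\nu\in P^+$ and suppose $(\lambda,\mu,\nu)$ is a low triple in $P^+$. Then there are integers $a,b\ge1$ such that $\{\lambda,\mu\}=\{au,bv\}$. If $\lambda=au$, $\mu=bv$ with $a\ge b$, then $\nu=\nu'+(a-b)u$ for some $\nu'\in\Lambda^+$ with $\nu'\le b\,\omega_\ell$. Moreover, if $\{\lambda,\mu\}=\{u,v\}$ then $\nu=0$.
   Context: Let $\Phi$ be of type $\mathsf{BC}_\ell$ realized in a Euclidean space $E$: the union of root systems of type $\mathsf B_\ell$ and $\mathsf C_\ell$, with basis $\alpha_1,\dots,\alpha_\ell$ the basis of $\mathsf B_\ell$ (Bourbaki numbering), $2\alpha_\ell\in\Phi$, and fundamental weights $\omega_1,\dots,\omega_\ell$ dual to $\alpha_1^\vee,\dots,\alpha_{\ell-1}^\vee,(2\alpha_\ell)^\vee$. Embed $E=E\times 0\subset E\times\mathbb R$ and take two linearly independent vectors $u,v\in (E\times\mathbb R)\setminus(E\times 0)$ with $u+v=\omega_\ell$. Let $\Lambda^+=\sum_{i=1}^\ell\mathbb N\omega_i$, $P^+=\sum_{i=1}^{\ell-1}\mathbb N\omega_i+\mathbb Nu+\mathbb Nv$, and $P$ the lattice generated by $P^+$. Order $P$ by $\mu\le\lambda$ iff $\lambda-\mu\in R^+$, where $R^+$ is the $\mathbb N$-span of $\alpha_1,\dots,\alpha_\ell$. A triple $(\lambda,\mu,\nu)$ in $P^+$ is a low triple if (i) whenever $\lambda',\mu'\in P^+$ with $\lambda'\le\lambda$, $\mu'\le\mu$,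 $\nu\le\lambda'+\mu'$, then $\lambda'=\lambda$ and $\mu'=\mu$; and (ii) $\nu+\sum_{i=1}^\ell\alpha_i\le\lambda+\mu$. *)

theory Defs
  imports Complex_Main
begin

text \<open>Vectors of E x R are functions nat => real:
  coordinates 0..ell-1 are the coordinates of E = R^ell (standard orthonormal
  basis e_1..e_ell is ev 0 .. ev (ell-1)), coordinate ell is the extra R-factor,
  and all coordinates beyond ell are zero.\<close>

type_synonym vec = "nat \<Rightarrow> real"

definition ev :: "nat \<Rightarrow> vec" where
  "ev i = (\<lambda>j. if j = i then 1 else 0)"

definition vzero :: vec where "vzero = (\<lambda>_. 0)"
definition vadd :: "vec \<Rightarrow> vec \<Rightarrow> vec" where "vadd x y = (\<lambda>j. x j + y j)"
definition vsub :: "vec \<Rightarrow> vec \<Rightarrow> vec" where "vsub x y = (\<lambda>j. x j - y j)"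
definition sc :: "real \<Rightarrow> vec \<Rightarrow> vec" where "sc c x = (\<lambda>j. c * x j)"

definition in_ExR :: "nat \<Rightarrow> vec \<Rightarrow> bool" where
  "in_ExR ell x \<longleftrightarrow> (\<forall>j>ell. x j = 0)"
definition in_E :: "nat \<Rightarrow> vec \<Rightarrow> bool" where
  "in_E ell x \<longleftrightarrow> (\<forall>j\<ge>ell. x j = 0)"

definition inner_v :: "nat \<Rightarrow> vec \<Rightarrow> vec \<Rightarrow> real" where
  "inner_v ell x y = (\<Sum>j\<le>ell. x j * y j)"

text \<open>Simple roots alpha_1..alpha_ell of B_ell (Bourbaki numbering):
  alpha_i = e_i - e_(i+1) for i < ell, alpha_ell = e_ell.  The root system
  BC_ell is the union of B_ell and C_ell, containing 2 alpha_ell.\<close>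
definition simple_root :: "nat \<Rightarrow> nat \<Rightarrow> vec" where
  "simple_root ell i = (if i < ell then vsub (ev (i - 1)) (ev i) else ev (ell - 1))"

definition coroot_of :: "nat \<Rightarrow> vec \<Rightarrow> vec" where
  "coroot_of ell \<beta> = sc (2 / inner_v ell \<beta> \<beta>) \<beta>"

definition bc_coroot :: "nat \<Rightarrow> nat \<Rightarrow> vec" where
  "bc_coroot ell i = (if i < ell then coroot_of ell (simple_root ell i)
                      else coroot_of ell (sc 2 (simple_root ell ell)))"

text \<open>Fundamental weights omega_i = e_1 + ... + e_i (1 \<le> i \<le> ell); these are the
  vectors of E dual to the coroots above, see lemma fund_weight_dual below.\<close>
definition fund_weight :: "nat \<Rightarrow> nat \<Rightarrow> vec" where
  "fund_weight ell i = (\<lambda>j. if j < i \<and> j < ell then 1 else 0)"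

definition Rplus :: "nat \<Rightarrow> vec set" where
  "Rplus ell = {x. \<exists>c::nat \<Rightarrow> nat.
      x = (\<lambda>j. \<Sum>i\<in>{1..ell}. real (c i) * simple_root ell i j)}"

definition Lplus :: "nat \<Rightarrow> vec set" where
  "Lplus ell = {x. \<exists>n::nat \<Rightarrow> nat.
      x = (\<lambda>j. \<Sum>i\<in>{1..ell}. real (n i) * fund_weight ell i j)}"

definition Pplus :: "nat \<Rightarrow> vec \<Rightarrow> vec \<Rightarrow> vec set" where
  "Pplus ell u v = {x. \<exists>(n::nat \<Rightarrow> nat) (m::nat) (k::nat).
      x = (\<lambda>j. (\<Sum>i\<in>{1..<ell}. real (n i) * fund_weight ell i j)
                 + real m * u j + real k * v j)}"

definition wle :: "nat \<Rightarrow> vec \<Rightarrow> vec \<Rightarrow> bool" where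
  "wle ell mu lam \<longleftrightarrow> vsub lam mu \<in> Rplus ell"

definition sum_simple_roots :: "nat \<Rightarrow> vec" where
  "sum_simple_roots ell = (\<lambda>j. \<Sum>i\<in>{1..ell}. simple_root ell i j)"

definition low_triple :: "nat \<Rightarrow> vec \<Rightarrow> vec \<Rightarrow> vec \<Rightarrow> vec \<Rightarrow> vec \<Rightarrow> bool" where
  "low_triple ell u v lam mu nu \<longleftrightarrow>
     lam \<in> Pplus ell u v \<and> mu \<in> Pplus ell u v \<and> nu \<in> Pplus ell u v \<and>
     (\<forall>lam'\<in>Pplus ell u v. \<forall>mu'\<in>Pplus ell u v.
        wle ell lam' lam \<and> wle ell mu' mu \<and> wle ell nu (vadd lam' mu') \<longrightarrow> lam' = lam \<and> mu' = mu) \<and>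
     wle ell (vadd nu (sum_simple_roots ell)) (vadd lam mu)"

lemma inner_v_ev: "j \<le> ell \<Longrightarrow> inner_v ell x (ev j) = x j"
  unfolding inner_v_def ev_def
  by (simp add: if_distrib[where f="\<lambda>t. _ * t"] sum.delta cong: if_cong)

lemma inner_v_sc: "inner_v ell x (sc c y) = c * inner_v ell x y"
  unfolding inner_v_def sc_def by (simp add: sum_distrib_left algebra_simps)

lemma inner_v_sc_left: "inner_v ell (sc c x) y = c * inner_v ell x y"
  unfolding inner_v_def sc_def by (simp add: sum_distrib_left algebra_simps)

lemma inner_v_sub: "inner_v ell x (vsub y z) = inner_v ell x y - inner_v ell x z"
  unfolding inner_v_def vsub_def by (simp add: sum_subtractf algebra_simps)

lemma fund_weight_dual:
  assumes "1 \<le> i" "i \<le> ell" "1 \<le> k" "k \<le> ell"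
  shows "inner_v ell (fund_weight ell i) (bc_coroot ell k) = (if i = k then 1 else 0)"
proof (cases "k < ell")
  case True
  have n: "inner_v ell (simple_root ell k) (simple_root ell k) = 2"
    using True assms
    by (simp add: simple_root_def inner_v_sub inner_v_ev, simp add: inner_v_def vsub_def ev_def)
  have m: "inner_v ell (fund_weight ell i) (simple_root ell k) = (if i = k then 1 else 0)"
    using True assms by (simp add: simple_root_def inner_v_sub inner_v_ev, auto simp add: fund_weight_def)
  show ?thesis using True
    by (simp add: bc_coroot_def coroot_of_def n inner_v_sc m)
next
  case False
  then have k: "k = ell" using assms by simp
  have n: "inner_v ell (sc 2 (simple_root ell ell)) (sc 2 (simple_root ell ell)) = 4"
    using assms
    using assms by (simp add: simple_root_def inner_v_sc inner_v_sc_left inner_v_ev, simp add: ev_def)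
  have m: "inner_v ell (fund_weight ell i) (sc 2 (simple_root ell ell)) = (if i = ell then 2 else 0)"
    using assms by (simp add: simple_root_def inner_v_sc inner_v_ev, auto simp add: fund_weight_def)
  have c: "bc_coroot ell k = sc (1/2) (sc 2 (simple_root ell ell))"
    using k by (simp add: bc_coroot_def coroot_of_def n)
  show ?thesis unfolding c inner_v_sc[of ell _ "1/2"] m using k by simp
qed

end

theory Submission
  imports Defs
begin

text \<open>Write \<epsilon>_j for ev (j - 1).  Then \<epsilon>_j = \<alpha>_j + ... + \<alpha>_ell, so \<epsilon>_j and
  \<epsilon>_1 - \<epsilon>_j lie in R^+, and \<epsilon>_1 is the sum of the simple roots.
  If (\<lambda>, \<mu>, \<nu>) is low, no \<lambda> - \<epsilon>_j lies in P^+: it is below \<lambda>, and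
  \<lambda> - \<epsilon>_j + \<mu> still dominates \<nu> because \<nu> + \<epsilon>_1 \<le> \<lambda> + \<mu>.  As
  \<omega>_i - \<epsilon>_i = \<omega>_(i-1) and u + v - \<epsilon>_ell = \<omega>_(ell-1), this forces
  \<lambda> and \<mu> to be multiples of u or of v.  The rest is read off from two linear
  functionals, the levels along u and along v: both are nonnegative on P^+ and on
  R^+, each kills its own vector and is 1 on the other one, and \<nu> + \<epsilon>_1 \<le> \<lambda> + \<mu>
  makes both grow by at least 1 from \<nu> to \<lambda> + \<mu>.\<close>

lemma Rplus_add:
  assumes "x \<in> Rplus ell" "y \<in> Rplus ell"
  shows "vadd x y \<in> Rplus ell"
proof -
  obtain c d where "x = (\<lambda>j. \<Sum>i\<in>{1..ell}. real (c i) * simple_root ell i j)"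
    and "y = (\<lambda>j. \<Sum>i\<in>{1..ell}. real (d i) * simple_root ell i j)"
    using assms unfolding Rplus_def by blast
  then have "vadd x y = (\<lambda>j. \<Sum>i\<in>{1..ell}. real (c i + d i) * simple_root ell i j)"
    by (simp add: vadd_def sum.distrib distrib_right)
  then show ?thesis unfolding Rplus_def by (auto intro!: exI[of _ "\<lambda>i. c i + d i"])
qed

lemma sum_simple_roots_in_Rplus:
  assumes "S \<subseteq> {1..ell}"
  shows "(\<lambda>j. \<Sum>i\<in>S. simple_root ell i j) \<in> Rplus ell"
proof -
  have "(\<Sum>i\<in>{1..ell}. real (if i \<in> S then 1 else 0) * simple_root ell i j)
      = (\<Sum>i\<in>{1..ell}. if i \<in> S then simple_root ell i j else 0)" for j
    by (rule sum.cong) auto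
  also have "\<dots> j = (\<Sum>i\<in>S. simple_root ell i j)" for j
    using sum.inter_restrict[of "{1..ell}" "\<lambda>i. simple_root ell i j" S] assms
    by (simp add: Int_absorb1)
  finally show ?thesis
    unfolding Rplus_def by (auto intro!: exI[of _ "\<lambda>i. if i \<in> S then 1 else 0"])
qed

lemma sum_simple_roots_from:
  "j \<le> ell \<Longrightarrow> (\<lambda>p. \<Sum>i\<in>{j..ell}. simple_root ell i p) = ev (j - 1)"
proof (induction rule: inc_induct)
  case (step j)
  have "{j..ell} = insert j {Suc j..ell}" using step.hyps by auto
  then show ?case using step by (auto simp: simple_root_def vsub_def ev_def fun_eq_iff)
qed (simp add: simple_root_def)

lemma sum_simple_roots_below:
  "j \<le> ell \<Longrightarrow> (\<lambda>p. \<Sum>i\<in>{1..<j}. simple_root ell i p) = vsub (ev 0) (ev (j - 1))"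
proof (induction j)
  case (Suc j)
  then show ?case by (cases "j = 0") (auto simp: simple_root_def vsub_def ev_def fun_eq_iff)
qed (simp add: vsub_def)

lemma ev_in_Rplus: "1 \<le> j \<Longrightarrow> j \<le> ell \<Longrightarrow> ev (j - 1) \<in> Rplus ell"
  using sum_simple_roots_in_Rplus[of "{j..ell}" ell] sum_simple_roots_from[of j ell] by simp

lemma ev0_minus_ev_in_Rplus:
  assumes "j \<le> ell"
  shows "vsub (ev 0) (ev (j - 1)) \<in> Rplus ell"
proof -
  have "{1..<j} \<subseteq> {1..ell}" using assms by auto
  then show ?thesis
    using sum_simple_roots_in_Rplus[of "{1..<j}" ell] sum_simple_roots_below[OF assms] by simp
qed

lemma sum_simple_roots_eq_ev0: "1 \<le> ell \<Longrightarrow> sum_simple_roots ell = ev 0"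
  using sum_simple_roots_from[of 1 ell] by (simp add: sum_simple_roots_def)

lemma Rplus_last_coord: "x \<in> Rplus ell \<Longrightarrow> x ell = 0"
  by (auto simp: Rplus_def simple_root_def vsub_def ev_def intro!: sum.neutral)

lemma Rplus_first_coord_nonneg: "x \<in> Rplus ell \<Longrightarrow> 0 \<le> x 0"
  by (auto simp: Rplus_def simple_root_def vsub_def ev_def intro!: sum_nonneg)

lemma wle_refl: "wle ell x x"
  using sum_simple_roots_in_Rplus[of "{}" ell] by (simp add: wle_def vsub_def)

text \<open>The first coordinate of the projection of x onto E along w.\<close>

definition level :: "nat \<Rightarrow> vec \<Rightarrow> vec \<Rightarrow> real" where
  "level ell w x = x 0 - x ell * w 0 / w ell"

lemma level_vadd: "level ell w (vadd x y) = level ell w x + level ell w y"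
  by (simp add: level_def vadd_def algebra_simps add_divide_distrib)

lemma level_sc: "level ell w (sc c x) = c * level ell w x"
  by (simp add: level_def sc_def algebra_simps)

lemma level_self: "w ell \<noteq> 0 \<Longrightarrow> level ell w w = 0"
  by (simp add: level_def)

lemma level_ev0: "1 \<le> ell \<Longrightarrow> level ell w (ev 0) = 1"
  by (simp add: level_def ev_def)

lemma wle_level_mono: "wle ell x y \<Longrightarrow> level ell w x \<le> level ell w y"
  using Rplus_last_coord[of "vsub y x" ell] Rplus_first_coord_nonneg[of "vsub y x" ell]
  by (simp add: wle_def level_def vsub_def algebra_simps diff_divide_distrib)

definition pweight :: "nat \<Rightarrow> vec \<Rightarrow> vec \<Rightarrow> (nat \<Rightarrow> nat) \<Rightarrow> nat \<Rightarrow> nat \<Rightarrow> vec" where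
  "pweight ell u v n m k =
     (\<lambda>j. (\<Sum>i\<in>{1..<ell}. real (n i) * fund_weight ell i j) + real m * u j + real k * v j)"

lemma Pplus_iff_pweight: "x \<in> Pplus ell u v \<longleftrightarrow> (\<exists>n m k. x = pweight ell u v n m k)"
  unfolding Pplus_def pweight_def by blast

lemma pweight_in_Pplus: "pweight ell u v n m k \<in> Pplus ell u v"
  using Pplus_iff_pweight by blast

lemma fund_weight_pred:
  "1 \<le> i \<Longrightarrow> i \<le> ell \<Longrightarrow> fund_weight ell i = vadd (fund_weight ell (i - 1)) (ev (i - 1))"
  by (auto simp: fund_weight_def ev_def vadd_def fun_eq_iff)

lemma pweight_incr:
  assumes "i < ell"
  shows "pweight ell u v (n(i := Suc (n i))) m k = vadd (pweight ell u v n m k) (fund_weight ell i)"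
proof (rule ext)
  fix j
  have "(\<Sum>i'\<in>{1..<ell}. real ((n(i := Suc (n i))) i') * fund_weight ell i' j)
      = (\<Sum>i'\<in>{1..<ell}. real (n i') * fund_weight ell i' j + (if i' = i then fund_weight ell i j else 0))"
    by (rule sum.cong) (auto simp: algebra_simps)
  also have "\<dots> = (\<Sum>i'\<in>{1..<ell}. real (n i') * fund_weight ell i' j) + fund_weight ell i j"
    using assms by (cases "i = 0") (auto simp: sum.distrib fund_weight_def)
  finally show "pweight ell u v (n(i := Suc (n i))) m k j = vadd (pweight ell u v n m k) (fund_weight ell i) j"
    by (simp add: pweight_def vadd_def)
qed

lemma Pplus_sub_ev:
  assumes "1 \<le> i" "i < ell" "0 < n i"
  shows "vsub (pweight ell u v n m k) (ev (i - 1)) \<in> Pplus ell u v"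
proof -
  define n' where "n' = n(i := n i - 1)"
  have "pweight ell u v n m k = vadd (pweight ell u v n' m k) (fund_weight ell i)"
    using pweight_incr[where i = i and n = n'] assms by (simp add: n'_def)
  then have "vsub (pweight ell u v n m k) (ev (i - 1)) = pweight ell u v (n'(i - 1 := Suc (n' (i - 1)))) m k"
    using pweight_incr[where i = "i - 1" and n = n'] fund_weight_pred[of i ell] assms
    by (simp add: vadd_def vsub_def fun_eq_iff)
  then show ?thesis using pweight_in_Pplus by simp
qed

locale bc_weight_lattice =
  fixes ell :: nat and u v :: vec
  assumes ell_pos: "1 \<le> ell"
    and u_plus_v: "vadd u v = fund_weight ell ell"
    and u_last_nonzero: "u ell \<noteq> 0"
begin

lemma v_eq: "v j = fund_weight ell ell j - u j"
  using fun_cong[OF u_plus_v, of j] by (simp add: vadd_def)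

lemma v_last: "v ell = - u ell"
  by (simp add: v_eq fund_weight_def)

lemma v_first: "v 0 = 1 - u 0"
  using ell_pos by (simp add: v_eq fund_weight_def)

lemma level_u_v: "level ell u v = 1"
  using u_last_nonzero by (simp add: level_def v_last v_first field_simps)

lemma level_v_u: "level ell v u = 1"
  using u_last_nonzero by (simp add: level_def v_last v_first field_simps)

lemma level_u_u: "level ell u u = 0"
  using u_last_nonzero by (rule level_self)

lemma level_v_v: "level ell v v = 0"
  using u_last_nonzero by (simp add: level_self v_last)

lemma pweight_first: "pweight ell u v n m k 0 = (\<Sum>i\<in>{1..<ell}. real (n i)) + real m * u 0 + real k * v 0"
  using ell_pos by (simp add: pweight_def fund_weight_def)

lemma pweight_last: "pweight ell u v n m k ell = (real m - real k) * u ell"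
  by (simp add: pweight_def fund_weight_def v_last algebra_simps)

lemma level_u_pweight: "level ell u (pweight ell u v n m k) = (\<Sum>i\<in>{1..<ell}. real (n i)) + real k"
  using u_last_nonzero by (simp add: level_def pweight_first pweight_last v_first field_simps)

lemma level_v_pweight: "level ell v (pweight ell u v n m k) = (\<Sum>i\<in>{1..<ell}. real (n i)) + real m"
  using u_last_nonzero by (simp add: level_def pweight_first pweight_last v_first v_last field_simps)

lemma level_Pplus_nonneg: "x \<in> Pplus ell u v \<Longrightarrow> w \<in> {u, v} \<Longrightarrow> 0 \<le> level ell w x"
  by (auto simp: Pplus_iff_pweight level_u_pweight level_v_pweight sum_nonneg)

lemma Pplus_level_zero:
  assumes "x \<in> Pplus ell u v" "level ell u x \<le> 0" "level ell v x \<le> 0"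
  shows "x = vzero"
proof -
  obtain n m k where x: "x = pweight ell u v n m k"
    using assms(1) Pplus_iff_pweight by blast
  have "(\<Sum>i\<in>{1..<ell}. real (n i)) = 0" "k = 0" "m = 0"
    using assms(2,3) sum_nonneg[of "{1..<ell}" "\<lambda>i. real (n i)"]
    by (simp_all add: x level_u_pweight level_v_pweight)
  then show ?thesis
    by (simp add: x pweight_def vzero_def sum_nonneg_eq_0_iff)
qed

lemma Pplus_decompose:
  assumes "x \<in> Pplus ell u v"
  shows "\<exists>x'\<in>Lplus ell. x = vadd x' (sc (x ell / u ell) u)"
proof -
  obtain n m k where x: "x = pweight ell u v n m k"
    using assms Pplus_iff_pweight by blast
  define x' where "x' = (\<lambda>j. \<Sum>i\<in>{1..ell}. real ((n(ell := k)) i) * fund_weight ell i j)"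
  have "x' \<in> Lplus ell"
    unfolding x'_def Lplus_def by blast
  moreover have "x' j = (\<Sum>i\<in>{1..<ell}. real (n i) * fund_weight ell i j) + real k * fund_weight ell ell j" for j
  proof -
    have "{1..ell} = insert ell {1..<ell}" using ell_pos by auto
    then show ?thesis unfolding x'_def by (simp add: add.commute)
  qed
  then have "x = vadd x' (sc (real m - real k) u)"
    by (simp add: x pweight_def vadd_def sc_def v_eq fun_eq_iff algebra_simps)
  moreover have "x ell / u ell = real m - real k"
    using u_last_nonzero by (simp add: x pweight_last)
  ultimately show ?thesis by auto
qed

lemma Pplus_sub_ev_last:
  assumes "0 < m" "0 < k"
  shows "vsub (pweight ell u v n m k) (ev (ell - 1)) \<in> Pplus ell u v"
proof -
  have "pweight ell u v n m k = vadd (pweight ell u v n (m - 1) (k - 1)) (fund_weight ell ell)"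
    using assms by (simp add: pweight_def vadd_def v_eq of_nat_diff fun_eq_iff algebra_simps)
  then have "vsub (pweight ell u v n m k) (ev (ell - 1))
      = pweight ell u v (n(ell - 1 := Suc (n (ell - 1)))) (m - 1) (k - 1)"
    using pweight_incr[where i = "ell - 1" and n = n] fund_weight_pred[of ell ell] ell_pos
    by (simp add: vadd_def vsub_def fun_eq_iff)
  then show ?thesis using pweight_in_Pplus by simp
qed

lemma Pplus_irreducible:
  assumes "x \<in> Pplus ell u v" and irred: "\<forall>j\<in>{1..ell}. vsub x (ev (j - 1)) \<notin> Pplus ell u v"
  shows "\<exists>a::nat. x = sc (real a) u \<or> x = sc (real a) v"
proof -
  obtain n m k where x: "x = pweight ell u v n m k"
    using assms(1) Pplus_iff_pweight by blast
  have "n i = 0" if "i \<in> {1..<ell}" for i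
    using irred Pplus_sub_ev[of i ell n u v m k] that x by fastforce
  moreover have "m = 0 \<or> k = 0"
    using irred Pplus_sub_ev_last[of m k n] ell_pos x by fastforce
  ultimately have "x = sc (real m) u \<or> x = sc (real k) v"
    by (auto simp: x pweight_def sc_def)
  then show ?thesis by blast
qed

end

lemma low_triple_swap:
  assumes "low_triple ell u v lam mu nu"
  shows "low_triple ell u v mu lam nu"
proof -
  have "vadd x y = vadd y x" for x y by (simp add: vadd_def add.commute)
  with assms show ?thesis unfolding low_triple_def by metis
qed

lemma low_triple_wle_ev0:
  "low_triple ell u v lam mu nu \<Longrightarrow> 1 \<le> ell \<Longrightarrow> wle ell (vadd nu (ev 0)) (vadd lam mu)"
  by (simp add: low_triple_def sum_simple_roots_eq_ev0)

lemma low_triple_level: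
  assumes "low_triple ell u v lam mu nu" "1 \<le> ell"
  shows "level ell w nu + 1 \<le> level ell w lam + level ell w mu"
  using wle_level_mono[OF low_triple_wle_ev0[OF assms]] assms(2)
  by (simp add: level_vadd level_ev0)

lemma low_triple_Rplus:
  assumes "low_triple ell u v lam mu nu" "1 \<le> ell"
  shows "vsub (vadd lam mu) nu \<in> Rplus ell"
proof -
  have "vsub (vadd lam mu) nu = vadd (vsub (vadd lam mu) (vadd nu (ev 0))) (ev 0)"
    by (simp add: vadd_def vsub_def fun_eq_iff)
  then show ?thesis
    using Rplus_add low_triple_wle_ev0[OF assms] ev_in_Rplus[of 1 ell] assms(2)
    by (simp add: wle_def)
qed

lemma low_triple_sub_ev_notin:
  assumes low: "low_triple ell u v lam mu nu" and j: "1 \<le> j" "j \<le> ell"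
  shows "vsub lam (ev (j - 1)) \<notin> Pplus ell u v"
proof
  define lam' where "lam' = vsub lam (ev (j - 1))"
  assume "vsub lam (ev (j - 1)) \<in> Pplus ell u v"
  then have "lam' \<in> Pplus ell u v" by (simp add: lam'_def)
  moreover have "wle ell lam' lam"
    using ev_in_Rplus[OF j] by (simp add: wle_def lam'_def vsub_def)
  moreover have "wle ell nu (vadd lam' mu)"
  proof -
    have "vsub (vadd lam' mu) nu
        = vadd (vsub (vadd lam mu) (vadd nu (ev 0))) (vsub (ev 0) (ev (j - 1)))"
      by (simp add: lam'_def vadd_def vsub_def fun_eq_iff)
    then show ?thesis
      using Rplus_add low_triple_wle_ev0[OF low] ev0_minus_ev_in_Rplus[OF j(2)] j
      by (simp add: wle_def)
  qed
  ultimately have "lam' = lam"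
    using low wle_refl unfolding low_triple_def by blast
  then have "lam' (j - 1) = lam (j - 1)" by simp
  then show False by (simp add: lam'_def vsub_def ev_def)
qed

context bc_weight_lattice
begin

lemma low_triple_left_multiple:
  assumes low: "low_triple ell u v lam mu nu"
  shows "\<exists>a::nat. lam = sc (real a) u \<or> lam = sc (real a) v"
proof (rule Pplus_irreducible)
  show "lam \<in> Pplus ell u v" using low unfolding low_triple_def by blast
  show "\<forall>j\<in>{1..ell}. vsub lam (ev (j - 1)) \<notin> Pplus ell u v"
    using low_triple_sub_ev_notin[OF low] by simp
qed

lemma low_triple_multiples:
  assumes low: "low_triple ell u v lam mu nu"
  shows "\<exists>a b::nat. 1 \<le> a \<and> 1 \<le> b \<and> {lam, mu} = {sc (real a) u, sc (real b) v}"
proof -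
  obtain a :: nat where a: "lam = sc (real a) u \<or> lam = sc (real a) v"
    using low_triple_left_multiple[OF low] by blast
  obtain b :: nat where b: "mu = sc (real b) u \<or> mu = sc (real b) v"
    using low_triple_left_multiple[OF low_triple_swap[OF low]] by blast
  have "1 \<le> level ell w lam + level ell w mu" if "w \<in> {u, v}" for w
    using low_triple_level[OF low ell_pos, of w] level_Pplus_nonneg[OF _ that, of nu] low
    unfolding low_triple_def by linarith
  then have u_levels: "1 \<le> level ell u lam + level ell u mu"
    and v_levels: "1 \<le> level ell v lam + level ell v mu" by auto
  note levels = level_sc level_u_u level_v_v level_u_v level_v_u
  from a b show ?thesis
  proof (elim disjE)
    assume "lam = sc (real a) u" "mu = sc (real b) v"
    then show ?thesis using u_levels v_levels by (intro exI[of _ a] exI[of _ b]) (simp add: levels)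
  next
    assume "lam = sc (real a) v" "mu = sc (real b) u"
    then show ?thesis using u_levels v_levels
      by (intro exI[of _ b] exI[of _ a]) (simp add: levels insert_commute)
  qed (use u_levels v_levels in \<open>simp_all add: levels\<close>)
qed

lemma low_triple_nu_decompose:
  assumes low: "low_triple ell u v lam mu nu"
    and lam: "lam = sc (real a) u" and mu: "mu = sc (real b) v" and "b \<le> a"
  shows "\<exists>nu'\<in>Lplus ell. nu = vadd nu' (sc (real (a - b)) u)
                          \<and> wle ell nu' (sc (real b) (fund_weight ell ell))"
proof -
  have D: "vsub (vadd lam mu) nu \<in> Rplus ell"
    using low_triple_Rplus[OF low ell_pos] .
  then have "nu ell = (real a - real b) * u ell"
    using Rplus_last_coord[OF D] by (simp add: lam mu vsub_def vadd_def sc_def v_last algebra_simps)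
  then have coeff: "nu ell / u ell = real (a - b)"
    using u_last_nonzero \<open>b \<le> a\<close> by (simp add: of_nat_diff)
  obtain nu' where "nu' \<in> Lplus ell" and nu: "nu = vadd nu' (sc (real (a - b)) u)"
    using Pplus_decompose[of nu] low coeff unfolding low_triple_def by auto
  moreover have "vsub (sc (real b) (fund_weight ell ell)) nu' = vsub (vadd lam mu) nu"
    using \<open>b \<le> a\<close>
    by (simp add: lam mu nu u_plus_v[symmetric] vsub_def vadd_def sc_def fun_eq_iff of_nat_diff algebra_simps)
  ultimately show ?thesis using D by (auto simp: wle_def)
qed

lemma low_triple_u_v:
  assumes low: "low_triple ell u v lam mu nu" and "{lam, mu} = {u, v}"
  shows "nu = vzero"
proof -
  have "level ell w lam + level ell w mu = 1" if "w \<in> {u, v}" for w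
    using assms(2) that
    by (auto simp: doubleton_eq_iff level_u_u level_v_v level_u_v level_v_u)
  then have "level ell w nu \<le> 0" if "w \<in> {u, v}" for w
    using low_triple_level[OF low ell_pos, of w] that by fastforce
  then show ?thesis
    using Pplus_level_zero low unfolding low_triple_def by blast
qed

end

theorem mainTheorem6:
  fixes ell :: nat and u v lam mu nu :: vec
  assumes "1 \<le> ell"
    and "in_ExR ell u" and "in_ExR ell v"
    and "\<not> in_E ell u" and "\<not> in_E ell v"
    and "\<forall>a b :: real. vadd (sc a u) (sc b v) = vzero \<longrightarrow> a = 0 \<and> b = 0"
    and "vadd u v = fund_weight ell ell"
    and "lam \<in> Pplus ell u v" and "mu \<in> Pplus ell u v" and "nu \<in> Pplus ell u v"
    and "low_triple ell u v lam mu nu"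
  shows "(\<exists>a b :: nat. 1 \<le> a \<and> 1 \<le> b \<and> {lam, mu} = {sc (real a) u, sc (real b) v})
     \<and> (\<forall>a b :: nat. lam = sc (real a) u \<and> mu = sc (real b) v \<and> b \<le> a \<longrightarrow>
          (\<exists>nu'\<in>Lplus ell. nu = vadd nu' (sc (real (a - b)) u)
                          \<and> wle ell nu' (sc (real b) (fund_weight ell ell))))
     \<and> ({lam, mu} = {u, v} \<longrightarrow> nu = vzero)"
proof -
  have "u ell \<noteq> 0"
    using assms(2,4) unfolding in_ExR_def in_E_def by (metis le_neq_implies_less)
  then interpret bc_weight_lattice ell u v
    using assms(1,7) by unfold_locales
  show ?thesis
    using low_triple_multiples low_triple_nu_decompose low_triple_u_v assms(11) by blast
qed

end
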